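(* Consider three CDNs, $CDN_1,CDN_2,CDN_3$, with performance parameters $0\le\beta_1<\beta_2<\beta_3<1$, competing by prices in the model described in the context. Let $(w_1^*,w_2^*,w_3^* )$ be a Nash equilibrium in prices at which each of the three CDNs attracts a set of content providers of positive measure, and let $\Lambda_k^*$ and $J_k^*$ denote the equilibrium number of content providers and revenue of $CDN_k$. Then $$\Lambda_1^*>\Lambda_2^*>2\Lambda_3^*,\qquad w_1^*>1.5\,w_2^*>3\,w_3^*,$$ and consequently the revenue of $CDN_2$ is at least four times that of $CDN_3$, the revenue of $CDN_1$ is at least six times that of $CDN_3$, and $J_1^*>1.5\,J_2^*>6\,J_3^*$.
   Context: Each $CDN_k$ ($k=1,2,3$) has a fixed performance parameter $\beta_k\in[0,1)$ and announces a price $w_k\ge0$. There is a continuum of content providers of total mass $\Lambda>0$ whose sensitivity parameters $\theta$ are uniformly distributed on $[0,1]$. A content provider with sensitivity $\theta$ that hires $CDN_k$ obtains payoff $U(\theta,k)=\theta(1-\beta_k)-w_k$; hiring no CDN gives payoff $0$. Each content provider hires at most one CDN and chooses an option of maximum payoff (indifferent providers form a set of measure zero). $\Lambda_k(w_1,w_2,w_3)$ is $\Lambda$ times the measure of the set of $\theta\in[0,1]$ choosing $CDN_k$, and the revenue of $CDN_k$ is $J_k=\Lambda_k w_k$. A Nash equilibrium is a price vector $(w_1^*,w_2^*,w_3^* )$ such that no $CDN_k$ can increase $J_k$ by changing only its own price $w_k\ge0$. *)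

theory Defs
  imports "HOL-Analysis.Analysis"
begin

text \<open>CDNs are indexed by 1, 2, 3. beta k is the performance parameter, w k the price.\<close>

definition CDNs :: "nat set" where "CDNs = {1, 2, 3}"

definition payoff :: "(nat \<Rightarrow> real) \<Rightarrow> (nat \<Rightarrow> real) \<Rightarrow> real \<Rightarrow> nat \<Rightarrow> real" where
  "payoff beta w theta k = theta * (1 - beta k) - w k"

text \<open>Set of sensitivities theta in [0,1] that choose CDN k (strictly best option,
  strictly better than hiring no CDN; indifferent providers form a null set).\<close>
definition chooses :: "(nat \<Rightarrow> real) \<Rightarrow> (nat \<Rightarrow> real) \<Rightarrow> nat \<Rightarrow> real set" where
  "chooses beta w k = {theta \<in> {0..1}. payoff beta w theta k > 0 \<and>
      (\<forall>j\<in>CDNs. j \<noteq> k \<longrightarrow> payoff beta w theta k > payoff beta w theta j)}"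

definition demand :: "real \<Rightarrow> (nat \<Rightarrow> real) \<Rightarrow> (nat \<Rightarrow> real) \<Rightarrow> nat \<Rightarrow> real" where
  "demand Lam beta w k = Lam * measure lborel (chooses beta w k)"

definition revenue :: "real \<Rightarrow> (nat \<Rightarrow> real) \<Rightarrow> (nat \<Rightarrow> real) \<Rightarrow> nat \<Rightarrow> real" where
  "revenue Lam beta w k = demand Lam beta w k * w k"

definition nash_eq :: "real \<Rightarrow> (nat \<Rightarrow> real) \<Rightarrow> (nat \<Rightarrow> real) \<Rightarrow> bool" where
  "nash_eq Lam beta w \<longleftrightarrow> (\<forall>k\<in>CDNs. w k \<ge> 0) \<and>
     (\<forall>k\<in>CDNs. \<forall>w'. w' \<ge> 0 \<longrightarrow> revenue Lam beta (w(k := w')) k \<le> revenue Lam beta w k)"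

end

theory Submission
  imports Defs
begin

text \<open>
  Call cutoff k the sensitivity at which a provider is indifferent between CDN k and its next
  worse option. Whenever 0 \<le> cutoff 3 \<le> cutoff 2 \<le> cutoff 1 \<le> 1, CDNs 3, 2, 1 serve the
  consecutive intervals between these cutoffs and 1, so the demand of each CDN is affine in its
  own price, with slope -Lam * slope k, and its revenue is a concave quadratic. At an equilibrium
  with positive demands the cutoffs are strictly ordered, which persists under small unilateral
  deviations; hence every price is an interior local maximiser and satisfies the first-order
  condition demand k = Lam * slope k * w k. For CDNs 3 and 2 these conditions read
  (w 2 - 2 w 3)(1 - beta 3) = 2 w 3 (beta 3 - beta 2) and
  (w 1 - 2 w 2)(beta 3 - beta 2) = (2 w 2 - w 3)(beta 2 - beta 1), so w 1 > 2 w 2 > 4 w 3, and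
  the comparisons of demands and revenues follow.
\<close>

lemma local_revenue_max_linear_demand:
  fixes a b w :: real
  assumes "0 \<le> w" and "0 < a"
    and max: "\<forall>\<^sub>F x in nhds w. 0 \<le> x \<longrightarrow> x * (a - b * (x - w)) \<le> w * a"
  shows "a = b * w"
proof -
  have "w \<noteq> 0" \<comment> \<open>at price 0, positive demand makes small positive prices profitable\<close>
  proof
    assume "w = 0"
    have "((\<lambda>x. a - b * x) \<longlongrightarrow> a) (at_right 0)"
      by (auto intro!: tendsto_eq_intros)
    then have "\<forall>\<^sub>F x in at_right 0. 0 < a - b * x"
      using \<open>0 < a\<close> by (rule order_tendstoD)
    moreover have "\<forall>\<^sub>F x in at_right 0. 0 \<le> x \<longrightarrow> x * (a - b * x) \<le> 0"
      using max \<open>w = 0\<close> by (auto simp: eventually_at_filter elim: eventually_mono)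
    ultimately have "\<forall>\<^sub>F x::real in at_right 0. False"
      using eventually_at_right_less[of 0]
      by eventually_elim (metis less_eq_real_def mult_pos_pos not_le)
    then show False by simp
  qed
  with \<open>0 \<le> w\<close> have "0 < w" by simp
  obtain d where "0 < d"
    and d: "\<forall>x. dist x w < d \<longrightarrow> 0 \<le> x \<longrightarrow> x * (a - b * (x - w)) \<le> w * a"
    using max by (auto simp: eventually_nhds_metric)
  have "((\<lambda>x. x * (a - b * (x - w))) has_real_derivative a - b * w) (at w)"
    by (auto intro!: derivative_eq_intros)
  moreover have "\<forall>y. \<bar>w - y\<bar> < min d w \<longrightarrow> y * (a - b * (y - w)) \<le> w * (a - b * (w - w))"
    using d by (auto simp: dist_real_def)
  ultimately have "a - b * w = 0"
    using \<open>0 < d\<close> \<open>0 < w\<close> by (intro DERIV_local_max[where d = "min d w"]) auto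
  then show ?thesis by simp
qed

lemma price_ratios_of_first_order_conditions:
  fixes d1 d2 a w1 w2 w3 :: real
  assumes "0 < d1" "0 < d2" "0 < a" "0 < w3"
    and foc2: "(w1 - w2) / d1 - (w2 - w3) / d2 = (1 / d1 + 1 / d2) * w2"
    and foc3: "(w2 - w3) / d2 - w3 / a = (1 / d2 + 1 / a) * w3"
  shows "2 * w3 < w2" "2 * w2 < w1" "(1 / d1 + 1 / d2) * w2 < 1 / d1 * w1"
    "2 * ((1 / d2 + 1 / a) * w3) < (1 / d1 + 1 / d2) * w2"
proof -
  have e3: "(w2 - 2 * w3) * a = 2 * w3 * d2"
    using foc3 assms(1-3) by (simp add: field_simps)
  then have "0 < (w2 - 2 * w3) * a"
    using assms(2,4) by simp
  then show w23: "2 * w3 < w2"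
    using assms(3) by (simp add: zero_less_mult_iff)
  have "(w1 - 2 * w2) * d2 = (2 * w2 - w3) * d1"
    using foc2 assms(1-3) by (simp add: field_simps)
  then have "0 < (w1 - 2 * w2) * d2"
    using w23 assms(1,4) by simp
  then show "2 * w2 < w1"
    using assms(2) by (simp add: zero_less_mult_iff)
  have "1 / d1 * w1 - (1 / d1 + 1 / d2) * w2 = (w2 - w3) / d2 + w2 / d1"
    using foc2 assms(1,2) by (simp add: field_simps)
  moreover have "0 < (w2 - w3) / d2 + w2 / d1"
    using w23 assms(1,2,4) by (simp add: add_pos_pos)
  ultimately show "(1 / d1 + 1 / d2) * w2 < 1 / d1 * w1"
    by simp
  have "(1 / d1 + 1 / d2) * w2 - 2 * ((1 / d2 + 1 / a) * w3)
      = w2 / d1 + ((w2 - 2 * w3) / d2 - 2 * w3 / a)"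
    using assms(1-3) by (simp add: field_simps)
  also have "\<dots> = w2 / d1"
    using e3 assms(2,3) by (simp add: field_simps)
  moreover have "0 < w2 / d1"
    using w23 assms(1,4) by simp
  ultimately show "2 * ((1 / d2 + 1 / a) * w3) < (1 / d1 + 1 / d2) * w2"
    by simp
qed

locale three_cdns =
  fixes beta :: "nat \<Rightarrow> real"
  assumes beta_12: "beta 1 < beta 2" and beta_23: "beta 2 < beta 3" and beta_3: "beta 3 < 1"
begin

text \<open>cutoff k is the sensitivity at which a provider is indifferent between CDN k and CDN k + 1,
  or, for k = 3, between CDN 3 and hiring no CDN.\<close>

definition cutoff1 :: "(nat \<Rightarrow> real) \<Rightarrow> real" where
  "cutoff1 v = (v 1 - v 2) / (beta 2 - beta 1)"

definition cutoff2 :: "(nat \<Rightarrow> real) \<Rightarrow> real" where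
  "cutoff2 v = (v 2 - v 3) / (beta 3 - beta 2)"

definition cutoff3 :: "(nat \<Rightarrow> real) \<Rightarrow> real" where
  "cutoff3 v = v 3 / (1 - beta 3)"

definition cutoffs_ordered :: "(nat \<Rightarrow> real) \<Rightarrow> bool" where
  "cutoffs_ordered v \<longleftrightarrow>
     0 \<le> cutoff3 v \<and> cutoff3 v \<le> cutoff2 v \<and> cutoff2 v \<le> cutoff1 v \<and> cutoff1 v \<le> 1"

definition slope :: "nat \<Rightarrow> real" where
  "slope k = (if k = 1 then 1 / (beta 2 - beta 1)
      else if k = 2 then 1 / (beta 2 - beta 1) + 1 / (beta 3 - beta 2)
      else 1 / (beta 3 - beta 2) + 1 / (1 - beta 3))"

lemma beta_gaps_pos: "0 < 1 - beta 3" "0 < beta 3 - beta 2" "0 < beta 2 - beta 1"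
  using beta_12 beta_23 beta_3 by simp_all

lemma cutoff_mult_gap:
  shows "(\<theta> - cutoff1 v) * (beta 2 - beta 1) = \<theta> * (beta 2 - beta 1) - (v 1 - v 2)"
    and "(\<theta> - cutoff2 v) * (beta 3 - beta 2) = \<theta> * (beta 3 - beta 2) - (v 2 - v 3)"
    and "(\<theta> - cutoff3 v) * (1 - beta 3) = \<theta> * (1 - beta 3) - v 3"
  using beta_gaps_pos by (simp_all add: cutoff1_def cutoff2_def cutoff3_def field_simps)

lemma slope_pos: "0 < slope k"
  using beta_gaps_pos by (simp add: slope_def add_pos_pos)

lemma payoff_cutoff_form:
  shows "payoff beta v \<theta> 3 = (\<theta> - cutoff3 v) * (1 - beta 3)"
    and "payoff beta v \<theta> 2 =
           (\<theta> - cutoff3 v) * (1 - beta 3) + (\<theta> - cutoff2 v) * (beta 3 - beta 2)"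
    and "payoff beta v \<theta> 1 =
           (\<theta> - cutoff3 v) * (1 - beta 3) + (\<theta> - cutoff2 v) * (beta 3 - beta 2)
             + (\<theta> - cutoff1 v) * (beta 2 - beta 1)"
  unfolding cutoff_mult_gap by (simp_all add: payoff_def algebra_simps)

lemma mem_chooses_iff:
  shows "\<theta> \<in> chooses beta v 1 \<longleftrightarrow> \<theta> \<in> {0..1} \<and> 0 < payoff beta v \<theta> 1
           \<and> payoff beta v \<theta> 2 < payoff beta v \<theta> 1 \<and> payoff beta v \<theta> 3 < payoff beta v \<theta> 1"
    and "\<theta> \<in> chooses beta v 2 \<longleftrightarrow> \<theta> \<in> {0..1} \<and> 0 < payoff beta v \<theta> 2
           \<and> payoff beta v \<theta> 1 < payoff beta v \<theta> 2 \<and> payoff beta v \<theta> 3 < payoff beta v \<theta> 2"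
    and "\<theta> \<in> chooses beta v 3 \<longleftrightarrow> \<theta> \<in> {0..1} \<and> 0 < payoff beta v \<theta> 3
           \<and> payoff beta v \<theta> 1 < payoff beta v \<theta> 3 \<and> payoff beta v \<theta> 2 < payoff beta v \<theta> 3"
  by (auto simp: chooses_def CDNs_def)

lemma chooses_subset:
  shows "chooses beta v 1 \<subseteq> {cutoff1 v<..1}"
    and "chooses beta v 2 \<subseteq> {cutoff2 v<..<cutoff1 v}"
    and "chooses beta v 3 \<subseteq> {cutoff3 v<..<cutoff2 v}"
  using beta_gaps_pos unfolding subset_iff mem_chooses_iff payoff_cutoff_form
  by (auto simp: zero_less_mult_iff mult_less_0_iff)

lemma chooses_eq_intervals:
  assumes "cutoffs_ordered v"
  shows "chooses beta v 1 = {cutoff1 v<..1}"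
    and "chooses beta v 2 = {cutoff2 v<..<cutoff1 v}"
    and "chooses beta v 3 = {cutoff3 v<..<cutoff2 v}"
proof -
  note ord = assms[unfolded cutoffs_ordered_def]
  note gaps = beta_gaps_pos
  have "\<theta> \<in> chooses beta v 1" if "cutoff1 v < \<theta>" "\<theta> \<le> 1" for \<theta>
  proof -
    have "0 < (\<theta> - cutoff3 v) * (1 - beta 3)" "0 < (\<theta> - cutoff2 v) * (beta 3 - beta 2)"
      "0 < (\<theta> - cutoff1 v) * (beta 2 - beta 1)"
      using that ord gaps by simp_all
    then show ?thesis
      using that ord unfolding mem_chooses_iff payoff_cutoff_form by simp
  qed
  moreover have "\<theta> \<in> chooses beta v 2" if "cutoff2 v < \<theta>" "\<theta> < cutoff1 v" for \<theta>
  proof -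
    have "0 < (\<theta> - cutoff3 v) * (1 - beta 3)" "0 < (\<theta> - cutoff2 v) * (beta 3 - beta 2)"
      "(\<theta> - cutoff1 v) * (beta 2 - beta 1) < 0"
      using that ord gaps by (simp_all add: mult_neg_pos)
    then show ?thesis
      using that ord unfolding mem_chooses_iff payoff_cutoff_form by simp
  qed
  moreover have "\<theta> \<in> chooses beta v 3" if "cutoff3 v < \<theta>" "\<theta> < cutoff2 v" for \<theta>
  proof -
    have "0 < (\<theta> - cutoff3 v) * (1 - beta 3)" "(\<theta> - cutoff2 v) * (beta 3 - beta 2) < 0"
      "(\<theta> - cutoff1 v) * (beta 2 - beta 1) < 0"
      using that ord gaps by (simp_all add: mult_neg_pos)
    then show ?thesis
      using that ord unfolding mem_chooses_iff payoff_cutoff_form by simp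
  qed
  ultimately show "chooses beta v 1 = {cutoff1 v<..1}" "chooses beta v 2 = {cutoff2 v<..<cutoff1 v}"
    "chooses beta v 3 = {cutoff3 v<..<cutoff2 v}"
    using chooses_subset[of v] by auto
qed
lemma demand_eq_interval_lengths:
  assumes "cutoffs_ordered v"
  shows "demand Lam beta v 1 = Lam * (1 - cutoff1 v)"
    and "demand Lam beta v 2 = Lam * (cutoff1 v - cutoff2 v)"
    and "demand Lam beta v 3 = Lam * (cutoff2 v - cutoff3 v)"
  using assms unfolding demand_def chooses_eq_intervals[OF assms] cutoffs_ordered_def by simp_all

lemma cutoffs_strictly_ordered:
  assumes "0 \<le> v 3" and "\<forall>k\<in>CDNs. chooses beta v k \<noteq> {}"
  shows "0 \<le> cutoff3 v" "cutoff3 v < cutoff2 v" "cutoff2 v < cutoff1 v" "cutoff1 v < 1"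
proof -
  have "{cutoff1 v<..1} \<noteq> {}" "{cutoff2 v<..<cutoff1 v} \<noteq> {}" "{cutoff3 v<..<cutoff2 v} \<noteq> {}"
    using assms(2) chooses_subset[of v] unfolding CDNs_def by blast+
  then show "cutoff3 v < cutoff2 v" "cutoff2 v < cutoff1 v" "cutoff1 v < 1"
    by simp_all
  show "0 \<le> cutoff3 v"
    using assms(1) beta_gaps_pos by (simp add: cutoff3_def)
qed

lemma tendsto_cutoffs_fun_upd:
  shows "((\<lambda>x. cutoff1 (v(k := x))) \<longlongrightarrow> cutoff1 v) (nhds (v k))"
    and "((\<lambda>x. cutoff2 (v(k := x))) \<longlongrightarrow> cutoff2 v) (nhds (v k))"
    and "((\<lambda>x. cutoff3 (v(k := x))) \<longlongrightarrow> cutoff3 v) (nhds (v k))"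
proof -
  have upd: "((\<lambda>x. (v(k := x)) i) \<longlongrightarrow> v i) (nhds (v k))" for i
    by (cases "i = k") (simp_all add: filterlim_ident)
  show "((\<lambda>x. cutoff1 (v(k := x))) \<longlongrightarrow> cutoff1 v) (nhds (v k))"
    "((\<lambda>x. cutoff2 (v(k := x))) \<longlongrightarrow> cutoff2 v) (nhds (v k))"
    "((\<lambda>x. cutoff3 (v(k := x))) \<longlongrightarrow> cutoff3 v) (nhds (v k))"
    unfolding cutoff1_def cutoff2_def cutoff3_def
    using beta_gaps_pos by (intro tendsto_intros upd; simp)+
qed

lemma eventually_cutoffs_ordered_fun_upd:
  assumes "0 \<le> v 3" "cutoff3 v < cutoff2 v" "cutoff2 v < cutoff1 v" "cutoff1 v < 1"
  shows "\<forall>\<^sub>F x in nhds (v k). 0 \<le> x \<longrightarrow> cutoffs_ordered (v(k := x))"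
proof -
  note lim = tendsto_cutoffs_fun_upd[of v k]
  have "\<forall>\<^sub>F x in nhds (v k). cutoff3 (v(k := x)) < cutoff2 (v(k := x))"
    using order_tendstoD(2)[OF tendsto_diff[OF lim(3) lim(2)], of 0] assms(2) by simp
  moreover have "\<forall>\<^sub>F x in nhds (v k). cutoff2 (v(k := x)) < cutoff1 (v(k := x))"
    using order_tendstoD(2)[OF tendsto_diff[OF lim(2) lim(1)], of 0] assms(3) by simp
  moreover have "\<forall>\<^sub>F x in nhds (v k). cutoff1 (v(k := x)) < 1"
    using order_tendstoD(2)[OF lim(1)] assms(4) by simp
  moreover have nonneg: "0 \<le> cutoff3 (v(k := x))" if "0 \<le> x" for x
    using that assms(1) beta_gaps_pos by (simp add: cutoff3_def)
  ultimately show ?thesis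
    unfolding cutoffs_ordered_def by eventually_elim (use nonneg in auto)
qed

lemma demand_fun_upd:
  assumes "k \<in> CDNs" and "cutoffs_ordered v" and "cutoffs_ordered (v(k := x))"
  shows "demand Lam beta (v(k := x)) k = demand Lam beta v k - Lam * slope k * (x - v k)"
proof -
  note before = demand_eq_interval_lengths[OF assms(2), where Lam = Lam]
  note after = demand_eq_interval_lengths[OF assms(3), where Lam = Lam]
  note gaps = beta_gaps_pos
  from assms(1) consider "k = 1" | "k = 2" | "k = 3"
    by (auto simp: CDNs_def)
  then show ?thesis
  proof cases
    case 1
    show ?thesis
      unfolding 1 before(1) after(1)[unfolded 1] using gaps
      by (simp add: slope_def cutoff1_def diff_divide_distrib algebra_simps)
  next
    case 2
    show ?thesis
      unfolding 2 before(2) after(2)[unfolded 2] using gaps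
      by (simp add: slope_def cutoff1_def cutoff2_def diff_divide_distrib algebra_simps)
  next
    case 3
    show ?thesis
      unfolding 3 before(3) after(3)[unfolded 3] using gaps
      by (simp add: slope_def cutoff2_def cutoff3_def diff_divide_distrib algebra_simps)
  qed
qed

lemma nash_cutoffs_strictly_ordered:
  assumes "nash_eq Lam beta w" and "\<forall>k\<in>CDNs. 0 < demand Lam beta w k"
  shows "0 \<le> w 3" "0 \<le> cutoff3 w" "cutoff3 w < cutoff2 w" "cutoff2 w < cutoff1 w" "cutoff1 w < 1"
proof -
  show "0 \<le> w 3"
    using assms(1) by (simp add: nash_eq_def CDNs_def)
  moreover have "\<forall>k\<in>CDNs. chooses beta w k \<noteq> {}"
    using assms(2) by (auto simp: demand_def)
  ultimately show "0 \<le> cutoff3 w" "cutoff3 w < cutoff2 w" "cutoff2 w < cutoff1 w" "cutoff1 w < 1"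
    by (rule cutoffs_strictly_ordered)+
qed

lemma nash_demand_eq_slope_price:
  assumes nash: "nash_eq Lam beta w" and pos: "\<forall>k\<in>CDNs. 0 < demand Lam beta w k"
    and k: "k \<in> CDNs"
  shows "demand Lam beta w k = Lam * slope k * w k"
proof -
  note cuts = nash_cutoffs_strictly_ordered[OF nash pos]
  have ordered: "cutoffs_ordered w"
    using cuts by (simp add: cutoffs_ordered_def)
  have "\<forall>\<^sub>F x in nhds (w k). 0 \<le> x \<longrightarrow>
          x * (demand Lam beta w k - Lam * slope k * (x - w k)) \<le> w k * demand Lam beta w k"
    using eventually_cutoffs_ordered_fun_upd[OF cuts(1,3-5)]
  proof eventually_elim
    case (elim x)
    show ?case
    proof
      assume "0 \<le> x"
      then have "revenue Lam beta (w(k := x)) k \<le> revenue Lam beta w k"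
        using nash k by (simp add: nash_eq_def)
      then show "x * (demand Lam beta w k - Lam * slope k * (x - w k)) \<le> w k * demand Lam beta w k"
        using demand_fun_upd[OF k ordered] elim \<open>0 \<le> x\<close>
        by (simp add: revenue_def mult.commute)
    qed
  qed
  moreover have "0 \<le> w k"
    using nash k by (simp add: nash_eq_def)
  moreover have "0 < demand Lam beta w k"
    using pos k by blast
  ultimately show ?thesis
    by (intro local_revenue_max_linear_demand)
qed

lemma nash_price_and_demand_ratios:
  assumes "0 < Lam" and nash: "nash_eq Lam beta w" and pos: "\<forall>k\<in>CDNs. 0 < demand Lam beta w k"
  shows "0 < w 3" "2 * w 3 < w 2" "2 * w 2 < w 1"
    "demand Lam beta w 2 < demand Lam beta w 1" "2 * demand Lam beta w 3 < demand Lam beta w 2"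
proof -
  note foc = nash_demand_eq_slope_price[OF nash pos]
  note cuts = nash_cutoffs_strictly_ordered[OF nash pos]
  have "cutoffs_ordered w"
    using cuts by (simp add: cutoffs_ordered_def)
  note shares = demand_eq_interval_lengths[OF this, where Lam = Lam]
  have foc2: "cutoff1 w - cutoff2 w = slope 2 * w 2"
    using shares(2) foc[of 2] \<open>0 < Lam\<close> by (simp add: CDNs_def)
  have foc3: "cutoff2 w - cutoff3 w = slope 3 * w 3"
    using shares(3) foc[of 3] \<open>0 < Lam\<close> by (simp add: CDNs_def)
  have "0 < slope 3 * w 3"
    using foc3 cuts(3) by simp
  then show "0 < w 3"
    using slope_pos zero_less_mult_pos by blast
  note ratios = price_ratios_of_first_order_conditions[OF beta_gaps_pos(3,2,1) \<open>0 < w 3\<close>]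
  have "2 * w 3 < w 2" "2 * w 2 < w 1"
    and "slope 2 * w 2 < slope 1 * w 1" "2 * (slope 3 * w 3) < slope 2 * w 2"
    using ratios foc2 foc3 by (simp_all add: slope_def cutoff1_def cutoff2_def cutoff3_def)
  then show "2 * w 3 < w 2" "2 * w 2 < w 1"
    and "demand Lam beta w 2 < demand Lam beta w 1"
    "2 * demand Lam beta w 3 < demand Lam beta w 2"
    using foc \<open>0 < Lam\<close> by (simp_all add: CDNs_def mult.assoc)
qed

end

theorem theorem2:
  fixes Lam :: real and beta w :: "nat \<Rightarrow> real"
  assumes "Lam > 0"
    and "0 \<le> beta 1" and "beta 1 < beta 2" and "beta 2 < beta 3" and "beta 3 < 1"
    and "nash_eq Lam beta w"
    and "\<forall>k\<in>CDNs. demand Lam beta w k > 0"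
  shows "demand Lam beta w 1 > demand Lam beta w 2 \<and> demand Lam beta w 2 > 2 * demand Lam beta w 3
       \<and> w 1 > 1.5 * w 2 \<and> 1.5 * w 2 > 3 * w 3
       \<and> revenue Lam beta w 2 \<ge> 4 * revenue Lam beta w 3
       \<and> revenue Lam beta w 1 \<ge> 6 * revenue Lam beta w 3
       \<and> revenue Lam beta w 1 > 1.5 * revenue Lam beta w 2
       \<and> 1.5 * revenue Lam beta w 2 > 6 * revenue Lam beta w 3"
proof -
  interpret three_cdns beta
    using assms(3-5) by unfold_locales
  note ratios = nash_price_and_demand_ratios[OF assms(1,6,7)]
  have "0 < demand Lam beta w 3"
    using assms(7) by (simp add: CDNs_def)
  with ratios have "0 < revenue Lam beta w 3"
    by (simp add: revenue_def)
  moreover have "4 * revenue Lam beta w 3 < revenue Lam beta w 2"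
    using mult_strict_mono[OF ratios(5,2)] ratios \<open>0 < demand Lam beta w 3\<close>
    by (simp add: revenue_def algebra_simps)
  moreover have "2 * revenue Lam beta w 2 < revenue Lam beta w 1"
    using mult_strict_mono[OF ratios(4,3)] ratios \<open>0 < demand Lam beta w 3\<close>
    by (simp add: revenue_def algebra_simps)
  ultimately show ?thesis
    using ratios by auto
qed

end
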